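(* Let $d\ge3$, $c\in\mathbb{Z}^+$, and $\phi_{(d,c)}(x)=x^d-cdx^{d-1}+c(d-1)$. Then the forward orbit $\{\phi_{(d,c)}^n(0):n\ge0\}$ of $0$ under $\phi_{(d,c)}$ is infinite.
   Context: $\phi^n$ denotes the $n$-fold iterate. *)

theory Defs
  imports Main
begin

definition phi :: "nat \<Rightarrow> int \<Rightarrow> int \<Rightarrow> int" where
  "phi d c x = x ^ d - c * int d * x ^ (d - 1) + c * (int d - 1)"

end

theory Submission
  imports Defs
begin

text \<open>On the set of integers that are \<open>\<le> -1\<close> or \<open>\<ge> c d + 1\<close> the map \<open>\<phi>\<close> is
  strictly expanding in absolute value: in \<open>\<phi>(x) = x\<^sup>d\<^sup>-\<^sup>1 (x - c d) + c (d - 1)\<close>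
  the first summand has absolute value at least \<open>\<bar>x\<bar> + c d\<close>, which outweighs the
  constant \<open>0 < c (d - 1) < c d\<close>. The orbit of \<open>0\<close> enters this set after two steps,
  since \<open>\<phi>(0) = a = c (d - 1)\<close> and \<open>\<phi>(a) = a - c a\<^sup>d\<^sup>-\<^sup>1 < 0\<close>. From then on the
  absolute values strictly increase, so the orbit is infinite.\<close>

lemma infinite_orbit_if_expanding:
  fixes f :: "'a \<Rightarrow> 'a" and m :: "'a \<Rightarrow> 'b::linorder"
  assumes maps_to: "\<And>x. x \<in> S \<Longrightarrow> f x \<in> S"
    and expands: "\<And>x. x \<in> S \<Longrightarrow> m x < m (f x)"
    and "x \<in> S"
  shows "infinite {(f ^^ n) x | n. True}"
proof -
  have in_S: "(f ^^ n) x \<in> S" for n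
    by (induction n) (simp_all add: \<open>x \<in> S\<close> maps_to)
  have "strict_mono (\<lambda>n. m ((f ^^ n) x))"
    by (rule strict_mono_Suc_iff[THEN iffD2]) (simp add: expands in_S)
  then have "inj (m \<circ> (\<lambda>n. (f ^^ n) x))"
    by (simp add: o_def strict_mono_imp_inj_on)
  then have "inj (\<lambda>n. (f ^^ n) x)"
    by (rule inj_on_imageI2)
  then show ?thesis
    unfolding infinite_iff_countable_subset by blast
qed

lemma orbit_of_iterate_subset:
  "{(f ^^ n) ((f ^^ k) x) | n. True} \<subseteq> {(f ^^ n) x | n. True}"
proof -
  have "(f ^^ n) ((f ^^ k) x) = (f ^^ (n + k)) x" for n
    by (simp add: funpow_add)
  then show ?thesis by blast
qed

lemma phi_factored:
  assumes "d \<ge> 1"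
  shows "phi d c x = x ^ (d - 1) * (x - c * int d) + c * (int d - 1)"
proof -
  have "x ^ d = x ^ (d - 1) * x"
    using assms by (simp flip: power_Suc2)
  then show ?thesis
    unfolding phi_def by (simp add: algebra_simps)
qed

lemma phi_gt_large:
  assumes "d \<ge> 2" and "c > 0" and "x \<ge> c * int d + 1"
  shows "phi d c x > x"
proof -
  have "c * int d \<ge> 0" using assms by simp
  then have "x \<ge> 1" using assms by linarith
  then have "x \<le> x ^ (d - 1)"
    using assms by (intro self_le_power) auto
  also have "\<dots> = x ^ (d - 1) * 1" by simp
  also have "\<dots> \<le> x ^ (d - 1) * (x - c * int d)"
    using assms \<open>x \<ge> 1\<close> by (intro mult_left_mono) auto
  finally have "x \<le> x ^ (d - 1) * (x - c * int d)" .
  moreover have "c * (int d - 1) > 0"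
    using assms by simp
  ultimately show ?thesis
    using phi_factored[of d c x] assms by linarith
qed

lemma phi_escapes_negative:
  assumes "d \<ge> 2" and "c > 0" and "x \<le> -1"
  shows "phi d c x < x \<or> phi d c x > c * int d - x"
proof -
  define y where "y = x ^ (d - 1) * (x - c * int d)"
  have "c * int d \<ge> 0"
    using assms by simp
  then have abs_diff: "\<bar>x - c * int d\<bar> = c * int d - x"
    using assms by linarith
  have "\<bar>y\<bar> = \<bar>x\<bar> ^ (d - 1) * (c * int d - x)"
    unfolding y_def abs_mult power_abs abs_diff ..
  also have "\<dots> \<ge> 1 * (c * int d - x)"
    using assms \<open>c * int d \<ge> 0\<close> by (intro mult_right_mono one_le_power) linarith+
  finally have "\<bar>y\<bar> \<ge> c * int d - x" by simp
  moreover have "0 < c * (int d - 1)" "c * (int d - 1) < c * int d"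
    using assms by simp_all
  moreover have "phi d c x = y + c * (int d - 1)"
    using phi_factored[of d c x] assms unfolding y_def by simp
  ultimately show ?thesis
    by (cases "y \<ge> 0") auto
qed

lemma phi_at_zero:
  assumes "d \<ge> 2"
  shows "phi d c 0 = c * (int d - 1)"
  using assms by (simp add: phi_def power_0_left)

text \<open>This is where \<open>d \<ge> 3\<close> is needed: for \<open>d = 2, c = 1\<close> the orbit of \<open>0\<close> is \<open>0, 1, 0, \<dots>\<close>.\<close>

lemma phi_at_critical_value_negative:
  assumes "d \<ge> 3" and "c > 0"
  shows "phi d c (c * (int d - 1)) \<le> -1"
proof -
  define a where "a = c * (int d - 1)"
  have "a \<ge> 2"
    using assms mult_mono[of 1 c 2 "int d - 1"] unfolding a_def by simp
  have "phi d c a = a - c * a ^ (d - 1)"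
    using phi_factored[of d c a] assms unfolding a_def by (simp add: algebra_simps)
  also have "\<dots> \<le> a - a ^ (d - 1)"
    using assms \<open>a \<ge> 2\<close> by simp
  also have "\<dots> \<le> a - a ^ 2"
    using assms \<open>a \<ge> 2\<close> by (simp add: power_increasing)
  also have "\<dots> \<le> -1"
    using mult_right_mono[of 2 a a] \<open>a \<ge> 2\<close> unfolding power2_eq_square by linarith
  finally show ?thesis
    unfolding a_def .
qed

lemma phi_expands_outside_critical_interval:
  assumes "d \<ge> 2" and "c > 0" and x: "x \<le> -1 \<or> c * int d + 1 \<le> x"
  shows "(phi d c x \<le> -1 \<or> c * int d + 1 \<le> phi d c x) \<and> \<bar>x\<bar> < \<bar>phi d c x\<bar>"
proof -
  have "c * int d \<ge> 0"
    using assms by simp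
  from x show ?thesis
  proof
    assume "x \<le> -1"
    then show ?thesis
      using phi_escapes_negative[of d c x] assms \<open>c * int d \<ge> 0\<close> by arith
  next
    assume "c * int d + 1 \<le> x"
    then show ?thesis
      using phi_gt_large[of d c x] assms \<open>c * int d \<ge> 0\<close> by arith
  qed
qed

theorem lemma5p1:
  fixes d :: nat and c :: int
  assumes "d \<ge> 3" and "c > 0"
  shows "infinite {(phi d c ^^ n) 0 | n. True}"
proof -
  define S where "S = {x. x \<le> -1 \<or> c * int d + 1 \<le> x}"
  have "(phi d c ^^ 2) 0 \<in> S"
    using phi_at_critical_value_negative[OF assms] phi_at_zero[of d c] assms
    by (simp add: S_def numeral_2_eq_2)
  moreover have "phi d c x \<in> S" and "\<bar>x\<bar> < \<bar>phi d c x\<bar>" if "x \<in> S" for x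
    using phi_expands_outside_critical_interval[of d c x] that assms
    unfolding S_def mem_Collect_eq by simp_all
  ultimately have "infinite {(phi d c ^^ n) ((phi d c ^^ 2) 0) | n. True}"
    by (intro infinite_orbit_if_expanding[where m = abs])
  then show ?thesis
    by (rule infinite_super[OF orbit_of_iterate_subset])
qed

end
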